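(* Let $p$ be a homogeneous polynomial on $\mathbb{R}^n$ of degree $d$ that is hyperbolic, with hyperbolic cone $\Lambda_+$ and its interior $\Lambda_{++}$. Let $A\in\mathbb{R}^{m\times n}$, $b\in\mathbb{R}^m$, $c\in\mathbb{R}^n$, and consider the hyperbolic program $$\mathsf{HP}:\quad \min_x \langle c,x\rangle \ \text{ s.t. } Ax=b,\ x\in\Lambda_+ .$$ Then for every $e\in\Lambda_{++}$ and every $0<\alpha\le 1$, the quadratic program $\mathsf{QP}_e(\alpha)$ is a relaxation of $\mathsf{HP}$, i.e. every feasible point of $\mathsf{HP}$ is feasible for $\mathsf{QP}_e(\alpha)$.
   Context: A real homogeneous polynomial $p\in\mathbb{R}[x_1,\dots,x_n]$ is hyperbolic in direction $e_0\in\mathbb{R}^n$ if for every $x\in\mathbb{R}^n$ the univariate polynomial $t\mapsto p(te_0-x)$ has only real roots; these roots $\lambda_1(x)\ge\dots\ge\lambda_d(x)$ are the hyperbolic eigenvalues of $x$. The hyperbolic cone is $\Lambda_+=\{x:\lambda_d(x)\ge 0\}$ and $\Lambda_{++}=\{x:\lambda_d(x)>0\}$; it is assumed that $\Lambda_+$ contains no nontrivial linear subspace. For $e\in\Lambda_{++}$, let $H(e)=\nabla^2(-\ln p)(e)$ (positive definite), $\langle u,v\rangle_e=u^\top H(e)v$, $\|v\|_e=\langle v,v\rangle_e^{1/2}$, and the closed quadratic cone $K_e(\alpha)=\{x\in\mathbb{R}^n:\langle e,x\rangle_e\ge\alpha\|x\|_e\}$. The quadratic program is $\mathsf{QP}_e(\alpha):\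 \min_x\langle c,x\rangle$ s.t. $Ax=b$, $x\in K_e(\alpha)$. *)

theory Defs
  imports "HOL-Analysis.Analysis" "HOL-Computational_Algebra.Polynomial"
begin

definition homogeneous_deg :: "(real^'n \<Rightarrow> real) \<Rightarrow> nat \<Rightarrow> bool" where
  "homogeneous_deg p d \<longleftrightarrow> (\<forall>t x. p (t *\<^sub>R x) = t ^ d * p x)"

definition hyperbolic_in :: "(real^'n \<Rightarrow> real) \<Rightarrow> real^'n \<Rightarrow> bool" where
  "hyperbolic_in p e0 \<longleftrightarrow> p e0 \<noteq> 0 \<and>
     (\<forall>x. \<exists>q :: real poly. (\<forall>t. poly q t = p (t *\<^sub>R e0 - x)) \<and>
           (\<forall>z :: complex. poly (map_poly complex_of_real q) z = 0 \<longrightarrow> z \<in> \<real>))"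

text \<open>Hyperbolic cone: smallest hyperbolic eigenvalue (root of t -> p(t e0 - x)) is >= 0, resp. > 0.\<close>
definition hcone :: "(real^'n \<Rightarrow> real) \<Rightarrow> real^'n \<Rightarrow> (real^'n) set" where
  "hcone p e0 = {x. \<forall>t. p (t *\<^sub>R e0 - x) = 0 \<longrightarrow> t \<ge> 0}"

definition hcone_int :: "(real^'n \<Rightarrow> real) \<Rightarrow> real^'n \<Rightarrow> (real^'n) set" where
  "hcone_int p e0 = {x. \<forall>t. p (t *\<^sub>R e0 - x) = 0 \<longrightarrow> t > 0}"

definition hess_form :: "(real^'n \<Rightarrow> real) \<Rightarrow> real^'n \<Rightarrow> real^'n \<Rightarrow> real^'n \<Rightarrow> real" where
  "hess_form f e u v = deriv (\<lambda>s. deriv (\<lambda>t. f (e + s *\<^sub>R u + t *\<^sub>R v)) 0) 0"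

text \<open>Local inner product <u,v>_e = u^T H(e) v with H(e) the Hessian of -ln p
  (written -ln |p|, which coincides with -ln p where p > 0 and has the same Hessian).\<close>
definition loc_inner :: "(real^'n \<Rightarrow> real) \<Rightarrow> real^'n \<Rightarrow> real^'n \<Rightarrow> real^'n \<Rightarrow> real" where
  "loc_inner p e u v = hess_form (\<lambda>y. - ln \<bar>p y\<bar>) e u v"

definition loc_norm :: "(real^'n \<Rightarrow> real) \<Rightarrow> real^'n \<Rightarrow> real^'n \<Rightarrow> real" where
  "loc_norm p e v = sqrt (loc_inner p e v v)"

definition quad_cone :: "(real^'n \<Rightarrow> real) \<Rightarrow> real^'n \<Rightarrow> real \<Rightarrow> (real^'n) set" where
  "quad_cone p e \<alpha> = {x. loc_inner p e e x \<ge> \<alpha> * loc_norm p e x}"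

text \<open>Feasible sets of HP and QP_e(alpha) (the objective c plays no role in feasibility).\<close>
definition HP_feasible :: "(real^'n \<Rightarrow> real) \<Rightarrow> real^'n \<Rightarrow> real^'n^'m \<Rightarrow> real^'m \<Rightarrow> (real^'n) set" where
  "HP_feasible p e0 A b = {x. A *v x = b \<and> x \<in> hcone p e0}"

definition QP_feasible :: "(real^'n \<Rightarrow> real) \<Rightarrow> real^'n \<Rightarrow> real \<Rightarrow> real^'n^'m \<Rightarrow> real^'m \<Rightarrow> (real^'n) set" where
  "QP_feasible p e \<alpha> A b = {x. A *v x = b \<and> x \<in> quad_cone p e \<alpha>}"

end

(*
  For x in the hyperbolic cone and e in its interior, all roots of the polynomial
  H(t) = p(e + t x) are real and negative (Garding), so every coefficient c_k of H has the
  sign of c_0. Differentiating -ln p at e gives <e,x>_e = c_1/c_0 >= 0 and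
  ||x||_e^2 = (c_1/c_0)^2 - 2 c_2/c_0 <= <e,x>_e^2, hence <e,x>_e >= alpha ||x||_e.

  Garding's theorem is proved with the complexification pC of p. Along a continuous family
  of complex lines whose directions are not zeros of p, the roots of pC on the line stay
  bounded and move continuously, so they cannot enter an open half-plane without crossing its
  boundary. Deforming the direction from e0 along a segment on which p does not vanish first
  shows that all directions of such segments are hyperbolic; a second deformation of this
  kind shows p(x + tau e) <> 0 for tau > 0.
*)
theory Submission
  imports Defs "HOL-Computational_Algebra.Fundamental_Theorem_Algebra"
begin

lemma poly_map_poly_of_real: "poly (map_poly complex_of_real q) (of_real x) = of_real (poly q x)"
  by (induction q) (auto simp: map_poly_pCons)

lemma poly_eq_on_infinite_set:
  fixes P Q :: "'a::idom poly"
  assumes "infinite A" and "\<And>x. x \<in> A \<Longrightarrow> poly P x = poly Q x"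
  shows "P = Q"
proof (rule ccontr)
  assume "P \<noteq> Q"
  hence "finite {x. poly (P - Q) x = 0}" by (intro poly_roots_finite) simp
  moreover have "A \<subseteq> {x. poly (P - Q) x = 0}" using assms(2) by auto
  ultimately show False using assms(1) finite_subset by blast
qed

lemma complex_poly_eqI_on_reals:
  fixes P Q :: "complex poly"
  assumes "\<And>x::real. poly P (of_real x) = poly Q (of_real x)"
  shows "P = Q"
proof (rule poly_eq_on_infinite_set)
  show "infinite (range complex_of_real)"
    using finite_imageD inj_of_real infinite_UNIV_char_0 by blast
qed (use assms in auto)

lemma real_poly_if_real_on_reals:
  fixes P :: "complex poly"
  assumes "\<And>x::real. poly P (of_real x) \<in> \<real>"
  shows "P = map_poly complex_of_real (map_poly Re P)"
proof -
  have "map_poly cnj P = P"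
    by (rule complex_poly_eqI_on_reals) (use assms in \<open>simp add: poly_map_poly_cnj Reals_cnj_iff\<close>)
  hence "coeff P k \<in> \<real>" for k
    by (metis coeff_map_poly complex_cnj_zero Reals_cnj_iff)
  thus ?thesis by (intro poly_eqI) (simp add: coeff_map_poly complex_is_Real_iff complex_eq_iff)
qed

lemma map_poly_of_real_mult:
  "map_poly complex_of_real (P * Q) = map_poly complex_of_real P * map_poly complex_of_real Q"
  by (rule poly_eqI) (simp add: coeff_map_poly coeff_mult of_real_sum)

lemma norm_lead_coeff_mult_power_le_norm_poly:
  fixes P :: "complex poly"
  assumes "\<epsilon> \<ge> 0" and root_far: "\<And>r. poly P r = 0 \<Longrightarrow> \<epsilon> \<le> norm (z - r)"
  shows "norm (lead_coeff P) * \<epsilon> ^ degree P \<le> norm (poly P z)"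
proof (cases "P = 0")
  case False
  obtain root where decompose: "smult (lead_coeff P) (\<Prod>i<degree P. [:-root i, 1:]) = P"
    by (rule complex_poly_decompose')
  have poly_P: "poly P w = lead_coeff P * (\<Prod>i<degree P. w - root i)" for w
    by (subst (1) decompose[symmetric]) (simp add: poly_prod)
  have "\<epsilon> \<le> norm (z - root i)" if "i < degree P" for i
    by (rule root_far) (use that in \<open>auto simp: poly_P\<close>)
  hence "\<epsilon> ^ degree P \<le> (\<Prod>i<degree P. norm (z - root i))"
    using prod_mono[of "{..<degree P}" "\<lambda>_. \<epsilon>"] assms(1) by simp
  thus ?thesis by (simp add: poly_P norm_mult prod_norm mult_left_mono)
qed simp

lemma coeff_mult_lead_coeff_nonneg_if_negative_roots:
  fixes H :: "real poly"
  assumes "\<And>z. poly (map_poly complex_of_real H) z = 0 \<Longrightarrow> z \<in> \<real> \<and> Re z < 0"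
  shows "coeff H k * lead_coeff H \<ge> 0"
  using assms
proof (induction "degree H" arbitrary: H k)
  case 0
  then obtain c where "H = [:c:]" by (metis degree_eq_zeroE)
  thus ?case by (cases k) auto
next
  case (Suc n)
  have "\<not> constant (poly (map_poly complex_of_real H))"
    using Suc.hyps(2) by (subst constant_degree) (simp add: degree_map_poly)
  then obtain z where "poly (map_poly complex_of_real H) z = 0"
    using fundamental_theorem_of_algebra by blast
  with Suc.prems obtain r where "z = of_real r" and "r < 0" by (metis Re_complex_of_real Reals_cases)
  hence "poly H r = 0"
    using \<open>poly (map_poly complex_of_real H) z = 0\<close> by (simp add: poly_map_poly_of_real)
  then obtain Q where H: "H = [:-r, 1:] * Q" by (metis dvdE poly_eq_0_iff_dvd)
  hence "Q \<noteq> 0" using Suc.hyps(2) by auto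
  hence "degree H = degree [:-r, 1:] + degree Q" unfolding H by (intro degree_mult_eq) auto
  hence "degree Q = n" using Suc.hyps(2) by simp
  moreover have "lead_coeff H = lead_coeff Q" by (simp add: H lead_coeff_mult del: mult_pCons_left)
  moreover have "poly (map_poly complex_of_real Q) w = 0 \<Longrightarrow> w \<in> \<real> \<and> Re w < 0" for w
    using Suc.prems[of w] unfolding H map_poly_of_real_mult by simp
  ultimately have IH: "coeff Q j * lead_coeff H \<ge> 0" for j
    using Suc.hyps(1) by metis
  define shifted where "shifted = (case k of 0 \<Rightarrow> 0 | Suc j \<Rightarrow> coeff Q j)"
  have coeff_H: "coeff H k = - r * coeff Q k + shifted"
    by (simp add: H shifted_def coeff_pCons split: nat.split)
  have "coeff H k * lead_coeff H = - r * (coeff Q k * lead_coeff H) + shifted * lead_coeff H"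
    unfolding coeff_H by (simp add: algebra_simps)
  moreover have "shifted * lead_coeff H \<ge> 0" using IH by (simp add: shifted_def split: nat.split)
  moreover have "- r * (coeff Q k * lead_coeff H) \<ge> 0"
    using IH[of k] \<open>r < 0\<close> by (simp add: mult_nonpos_nonneg)
  ultimately show ?case by simp
qed

definition complex_vec :: "real^'n \<Rightarrow> complex^'n" where
  "complex_vec y = (\<chi> i. complex_of_real (y $ i))"

lemma complex_vec_add: "complex_vec (x + y) = complex_vec x + complex_vec y"
  and complex_vec_scaleR: "complex_vec (c *\<^sub>R x) = of_real c *s complex_vec x"
  by (simp_all add: complex_vec_def vec_eq_iff)

lemmas complex_vec_linear = complex_vec_add complex_vec_scaleR

definition complex_extension :: "(real^'n \<Rightarrow> real) \<Rightarrow> (complex^'n \<Rightarrow> complex) \<Rightarrow> bool" where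
  "complex_extension f fC \<longleftrightarrow> (\<forall>y. fC (complex_vec y) = of_real (f y)) \<and> continuous_on UNIV fC \<and>
     (\<forall>z0 z1. \<exists>P. \<forall>t. fC (z0 + t *s z1) = poly P t)"

lemma bounded_linear_vec_expansion:
  fixes f :: "real^'n \<Rightarrow> real"
  assumes "bounded_linear f"
  shows "f y = (\<Sum>i\<in>UNIV. y $ i * f (axis i 1))"
proof -
  have "f y = f (\<Sum>i\<in>UNIV. y $ i *\<^sub>R axis i 1)"
    using basis_expansion[of y] by (simp add: scalar_mult_eq_scaleR)
  also have "\<dots> = (\<Sum>i\<in>UNIV. y $ i * f (axis i 1))"
    using assms by (simp add: linear_sum bounded_linear.linear linear_scale)
  finally show ?thesis .
qed

lemma complex_extension_add:
  assumes f: "complex_extension f fC" and g: "complex_extension g gC"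
  shows "complex_extension (\<lambda>x. f x + g x) (\<lambda>z. fC z + gC z)"
  unfolding complex_extension_def
proof (intro conjI allI)
  fix z0 z1
  obtain P Q where "\<And>t. fC (z0 + t *s z1) = poly P t" and "\<And>t. gC (z0 + t *s z1) = poly Q t"
    using f g unfolding complex_extension_def by metis
  thus "\<exists>R. \<forall>t. fC (z0 + t *s z1) + gC (z0 + t *s z1) = poly R t"
    by (intro exI[of _ "P + Q"]) simp
qed (use f g in \<open>auto simp: complex_extension_def intro: continuous_intros\<close>)

lemma complex_extension_mult:
  assumes f: "complex_extension f fC" and g: "complex_extension g gC"
  shows "complex_extension (\<lambda>x. f x * g x) (\<lambda>z. fC z * gC z)"
  unfolding complex_extension_def
proof (intro conjI allI)
  fix z0 z1
  obtain P Q where "\<And>t. fC (z0 + t *s z1) = poly P t" and "\<And>t. gC (z0 + t *s z1) = poly Q t"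
    using f g unfolding complex_extension_def by metis
  thus "\<exists>R. \<forall>t. fC (z0 + t *s z1) * gC (z0 + t *s z1) = poly R t"
    by (intro exI[of _ "P * Q"]) simp
qed (use f g in \<open>auto simp: complex_extension_def intro: continuous_intros\<close>)

lemma complex_extension_linear:
  fixes f :: "real^'n \<Rightarrow> real"
  assumes "bounded_linear f"
  shows "complex_extension f (\<lambda>z. \<Sum>i\<in>UNIV. of_real (f (axis i 1)) * z $ i)"
  unfolding complex_extension_def
proof (intro conjI allI)
  show "(\<Sum>i\<in>UNIV. of_real (f (axis i 1)) * complex_vec y $ i) = of_real (f y)" for y
    unfolding complex_vec_def bounded_linear_vec_expansion[OF assms, of y] by (simp add: mult.commute)
  show "continuous_on UNIV (\<lambda>z::complex^'n. \<Sum>i\<in>UNIV. of_real (f (axis i 1)) * z $ i)"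
    by (intro continuous_intros linear_continuous_on bounded_linear_vec_nth)
  show "\<exists>P. \<forall>t. (\<Sum>i\<in>UNIV. of_real (f (axis i 1)) * (z0 + t *s z1) $ i) = poly P t" for z0 z1
    by (rule exI[of _ "[:\<Sum>i\<in>UNIV. of_real (f (axis i 1)) * z0 $ i,
                         \<Sum>i\<in>UNIV. of_real (f (axis i 1)) * z1 $ i:]"])
      (simp add: algebra_simps sum.distrib sum_distrib_left)
qed

lemma real_polynomial_function_complex_extension:
  fixes f :: "real^'n \<Rightarrow> real"
  assumes "real_polynomial_function f"
  obtains fC where "complex_extension f fC"
  using assms
proof (induction arbitrary: thesis)
  case (linear f)
  thus ?case using complex_extension_linear by blast
next
  case (const a)
  have "complex_extension (\<lambda>x. a) (\<lambda>z. of_real a)"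
    unfolding complex_extension_def by (auto intro!: exI[of _ "[:of_real a:]"])
  thus ?case by (rule const.prems)
next
  case (add f g)
  thus ?case using complex_extension_add by metis
next
  case (mult f g)
  thus ?case using complex_extension_mult by metis
qed

lemma complex_extension_real_line:
  assumes "complex_extension f fC"
  obtains q :: "real poly"
  where "\<And>t. fC (complex_vec y0 + t *s complex_vec y1) = poly (map_poly complex_of_real q) t"
    and "\<And>r. poly q r = f (y0 + r *\<^sub>R y1)"
proof -
  obtain P where P: "\<And>t. fC (complex_vec y0 + t *s complex_vec y1) = poly P t"
    using assms unfolding complex_extension_def by metis
  have real: "poly P (of_real r) = of_real (f (y0 + r *\<^sub>R y1))" for r
    using P[of "of_real r", symmetric] assms by (simp add: complex_extension_def flip: complex_vec_add complex_vec_scaleR)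
  hence "P = map_poly complex_of_real (map_poly Re P)"
    by (intro real_poly_if_real_on_reals) simp
  moreover have "poly (map_poly Re P) r = f (y0 + r *\<^sub>R y1)" for r
    using real[of r] poly_map_poly_of_real[of "map_poly Re P" r] \<open>P = _\<close> by simp
  ultimately show ?thesis using that P by metis
qed

lemma continuous_on_vector_scalar_mult [continuous_intros]:
  fixes f :: "'a::topological_space \<Rightarrow> 'b::real_normed_field" and g :: "'a \<Rightarrow> 'b^'n"
  assumes "continuous_on S f" and "continuous_on S g"
  shows "continuous_on S (\<lambda>x. f x *s g x)"
  unfolding vector_scalar_mult_def by (intro continuous_intros assms)

lemma continuous_on_complex_vec_segment:
  "continuous_on S (\<lambda>l. complex_vec ((1 - l) *\<^sub>R a + l *\<^sub>R v))"
  unfolding complex_vec_linear by (intro continuous_intros)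

locale homogeneous_complex_extension =
  fixes p :: "real^'n \<Rightarrow> real" and d :: nat and pC :: "complex^'n \<Rightarrow> complex"
  assumes extension: "complex_extension p pC" and homogeneous: "homogeneous_deg p d"
begin

lemma pC_complex_vec [simp]: "pC (complex_vec y) = of_real (p y)"
  using extension by (simp add: complex_extension_def)

lemma continuous_on_pC: "continuous_on UNIV pC"
  using extension by (simp add: complex_extension_def)

lemma pC_line_poly:
  obtains P where "\<And>t. pC (z0 + t *s z1) = poly P t"
  using extension unfolding complex_extension_def by metis

lemma pC_scale_complex_vec: "pC (c *s complex_vec y) = c ^ d * of_real (p y)"
proof -
  obtain P where P: "\<And>t. pC (0 + t *s complex_vec y) = poly P t" using pC_line_poly by metis
  have "P = monom (of_real (p y)) d"
  proof (rule complex_poly_eqI_on_reals)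
    fix x :: real
    have "poly P (of_real x) = of_real (p (x *\<^sub>R y))"
      using P[of "of_real x"] by (simp flip: complex_vec_scaleR)
    also have "\<dots> = of_real (x ^ d * p y)" using homogeneous by (simp add: homogeneous_deg_def)
    finally show "poly P (of_real x) = poly (monom (of_real (p y)) d) (of_real x)"
      by (simp add: poly_monom mult.commute)
  qed
  thus ?thesis using P[of c] by (simp add: poly_monom mult.commute)
qed

lemma pC_homogeneous: "pC (c *s z) = c ^ d * pC z"
proof -
  define a b where "a = (\<chi> i. Re (z $ i))" and "b = (\<chi> i. Im (z $ i))"
  have z: "z = complex_vec a + \<i> *s complex_vec b"
    by (simp add: vec_eq_iff complex_vec_def a_def b_def complex_eq_iff)
  obtain P where P: "\<And>t. pC (c *s complex_vec a + t *s (c *s complex_vec b)) = poly P t"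
    using pC_line_poly by metis
  obtain Q where Q: "\<And>t. pC (complex_vec a + t *s complex_vec b) = poly Q t"
    using pC_line_poly by metis
  have "P = smult (c ^ d) Q"
  proof (rule complex_poly_eqI_on_reals)
    fix x :: real
    have "c *s complex_vec a + of_real x *s (c *s complex_vec b) = c *s complex_vec (a + x *\<^sub>R b)"
      by (simp add: complex_vec_linear vec_eq_iff algebra_simps)
    hence "poly P (of_real x) = pC (c *s complex_vec (a + x *\<^sub>R b))"
      using P[of "of_real x"] by metis
    also have "\<dots> = c ^ d * of_real (p (a + x *\<^sub>R b))" by (rule pC_scale_complex_vec)
    also have "\<dots> = poly (smult (c ^ d) Q) (of_real x)"
      using Q[of "of_real x", symmetric] by (simp flip: complex_vec_add complex_vec_scaleR)
    finally show "poly P (of_real x) = poly (smult (c ^ d) Q) (of_real x)" .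
  qed
  moreover have "c *s z = c *s complex_vec a + \<i> *s (c *s complex_vec b)"
    by (simp add: z vec_eq_iff algebra_simps)
  ultimately show ?thesis using P[of \<i>] Q[of \<i>] z by (simp add: ac_simps)
qed

text \<open>By homogeneity \<open>pC (z0 + t *s z1) = t ^ d * pC (z1 + inverse t *s z0)\<close>, so the line
  polynomial is the reflection of the one with the roles of \<open>z0\<close> and \<open>z1\<close> swapped.\<close>

lemma pC_line_poly_degree:
  obtains P where "\<And>t. pC (z0 + t *s z1) = poly P t" and "degree P \<le> d" and "coeff P d = pC z1"
proof -
  obtain P where P: "\<And>t. pC (z0 + t *s z1) = poly P t" using pC_line_poly by metis
  obtain R where R: "\<And>t. pC (z1 + t *s z0) = poly R t" using pC_line_poly by metis
  have reflect: "monom 1 (degree R) * P = monom 1 d * reflect_poly R"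
  proof (rule poly_eq_on_infinite_set)
    show "infinite (- {0::complex})"
      using infinite_UNIV_char_0 by (simp add: Compl_eq_Diff_UNIV)
  next
    fix t :: complex assume "t \<in> - {0}"
    hence t: "t \<noteq> 0" by simp
    have "poly P t = pC (z0 + t *s z1)" by (rule P[symmetric])
    also have "\<dots> = pC (t *s (z1 + inverse t *s z0))"
      by (rule arg_cong[where f = pC]) (use t in \<open>simp add: vec_eq_iff field_simps\<close>)
    also have "\<dots> = t ^ d * poly R (inverse t)" by (simp only: pC_homogeneous R)
    finally have "poly P t = t ^ d * poly R (inverse t)" .
    thus "poly (monom 1 (degree R) * P) t = poly (monom 1 d * reflect_poly R) t"
      using t by (simp add: poly_monom poly_reflect_poly_nz)
  qed
  have coeff_P: "coeff P m = coeff (reflect_poly R) (m + degree R - d)" if "m \<ge> d" for m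
    using arg_cong[OF reflect, of "\<lambda>Q. coeff Q (m + degree R)"] that
    by (simp add: coeff_monom_mult)
  have "degree P \<le> d"
    by (rule degree_le) (auto simp: coeff_P coeff_reflect_poly)
  moreover have "coeff P d = pC z1"
    using coeff_P[of d] R[of 0] by (simp add: coeff_reflect_poly poly_0_coeff_0)
  ultimately show ?thesis using that P by blast
qed

lemma pC_line_root_near:
  assumes "\<epsilon> > 0" and "norm (pC (z0 + t0 *s z1)) < norm (pC z1) * \<epsilon> ^ d"
  shows "\<exists>t. pC (z0 + t *s z1) = 0 \<and> norm (t - t0) < \<epsilon>"
proof (rule ccontr)
  assume no_root: "\<not> ?thesis"
  obtain P where P: "\<And>t. pC (z0 + t *s z1) = poly P t" "degree P \<le> d" "coeff P d = pC z1"
    using pC_line_poly_degree by metis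
  have "pC z1 \<noteq> 0" using assms(2) by (auto simp: le_less_trans[OF norm_ge_zero])
  hence "degree P = d" using P by (metis le_antisym le_degree)
  have "norm (lead_coeff P) * \<epsilon> ^ degree P \<le> norm (poly P t0)"
  proof (rule norm_lead_coeff_mult_power_le_norm_poly)
    show "\<epsilon> \<le> norm (t0 - r)" if "poly P r = 0" for r
      using no_root that P(1) by (metis norm_minus_commute not_less)
  qed (use assms in simp)
  thus False using assms(2) P \<open>degree P = d\<close> by simp
qed

lemma pC_line_root_persists:
  fixes S :: "'a::metric_space set"
  assumes "continuous_on S base" and "continuous_on S dir" and "l0 \<in> S"
    and "pC (base l0 + t0 *s dir l0) = 0" and "pC (dir l0) \<noteq> 0" and "\<epsilon> > 0"
  shows "\<exists>\<eta>>0. \<forall>l\<in>S. dist l l0 < \<eta> \<longrightarrow> (\<exists>t. pC (base l + t *s dir l) = 0 \<and> norm (t - t0) < \<epsilon>)"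
proof -
  define g where "g l = norm (pC (dir l)) * \<epsilon> ^ d - norm (pC (base l + t0 *s dir l))" for l
  have "continuous_on S g" unfolding g_def
    by (intro continuous_intros continuous_on_compose2[OF continuous_on_pC] assms(1,2)) auto
  moreover have "g l0 > 0" using assms(4-6) by (simp add: g_def)
  ultimately obtain \<eta> where "\<eta> > 0" and "\<forall>l\<in>S. dist l l0 < \<eta> \<longrightarrow> dist (g l) (g l0) < g l0"
    using assms(3) unfolding continuous_on_iff by blast
  hence "\<forall>l\<in>S. dist l l0 < \<eta> \<longrightarrow> g l > 0" by (auto simp: dist_real_def)
  thus ?thesis using \<open>\<eta> > 0\<close> pC_line_root_near[OF assms(6)] by (auto simp: g_def)
qed

text \<open>A root \<open>t \<noteq> 0\<close> gives the root \<open>inverse t\<close> of the swapped line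
  \<open>pC (dir l + s *s base l)\<close>, and by compactness these roots stay away from \<open>0\<close>.\<close>

lemma pC_line_roots_bounded:
  fixes S :: "'a::heine_borel set"
  assumes "compact S" and "continuous_on S base" and "continuous_on S dir"
    and "\<And>l. l \<in> S \<Longrightarrow> pC (dir l) \<noteq> 0"
  obtains R where "\<And>l t. l \<in> S \<Longrightarrow> pC (base l + t *s dir l) = 0 \<Longrightarrow> norm t \<le> R"
proof -
  define K where "K = {x \<in> S \<times> UNIV. pC (dir (fst x) + snd x *s base (fst x)) = 0}"
  have "continuous_on (S \<times> UNIV) (\<lambda>x. pC (dir (fst x) + snd x *s base (fst x)))"
    by (intro continuous_on_compose2[OF continuous_on_pC] continuous_intros
        continuous_on_compose2[OF assms(2)] continuous_on_compose2[OF assms(3)]) auto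
  moreover have "closed (S \<times> (UNIV :: complex set))"
    by (intro closed_Times closed_UNIV compact_imp_closed assms(1))
  ultimately have closed_K: "closed K"
    unfolding K_def by (rule continuous_closed_preimage_constant)
  have "compact (S \<times> {0})" using assms(1) by (simp add: compact_Times)
  moreover have "(S \<times> {0}) \<inter> K = {}" using assms(4) by (auto simp: K_def)
  ultimately obtain \<rho> where "\<rho> > 0" and \<rho>: "\<forall>x\<in>S \<times> {0}. \<forall>y\<in>K. \<rho> \<le> dist x y"
    using separate_compact_closed[OF _ closed_K] by blast
  have small: "pC (dir l + z *s base l) \<noteq> 0" if "l \<in> S" and "norm z < \<rho>" for l z
    using \<rho> that by (force simp: K_def dist_Pair_Pair)
  have "norm t \<le> 1 / \<rho>" if "l \<in> S" and root: "pC (base l + t *s dir l) = 0" for l t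
  proof (rule ccontr)
    assume "\<not> norm t \<le> 1 / \<rho>"
    hence t_large: "1 / \<rho> < norm t" by simp
    hence "t \<noteq> 0"
      using \<open>\<rho> > 0\<close> by (metis norm_zero not_less_iff_gr_or_eq zero_less_divide_1_iff)
    have "norm (inverse t) < \<rho>"
      using t_large \<open>\<rho> > 0\<close>
      by (metis div_by_1 inverse_divide less_imp_inverse_less norm_inverse zero_less_divide_1_iff)
    have "base l + t *s dir l = t *s (dir l + inverse t *s base l)"
      using \<open>t \<noteq> 0\<close> by (simp add: vec_eq_iff field_simps)
    hence "t ^ d * pC (dir l + inverse t *s base l) = 0" using root by (simp only: pC_homogeneous)
    thus False using small[OF \<open>l \<in> S\<close> \<open>norm (inverse t) < \<rho>\<close>] \<open>t \<noteq> 0\<close> by simp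
  qed
  thus ?thesis using that by blast
qed

lemma openin_line_root_params:
  fixes S :: "'a::metric_space set"
  assumes base: "continuous_on S base" and dir: "continuous_on S dir"
    and dir_nonzero: "\<And>l. l \<in> S \<Longrightarrow> pC (dir l) \<noteq> 0" and "open V"
  shows "openin (top_of_set S) {l \<in> S. \<exists>t\<in>V. pC (base l + t *s dir l) = 0}"
  unfolding openin_euclidean_subtopology_iff
proof (intro conjI ballI)
  fix l0 assume "l0 \<in> {l \<in> S. \<exists>t\<in>V. pC (base l + t *s dir l) = 0}"
  then obtain t0 where "l0 \<in> S" "t0 \<in> V" and root: "pC (base l0 + t0 *s dir l0) = 0"
    by blast
  obtain \<epsilon> where "\<epsilon> > 0" and "ball t0 \<epsilon> \<subseteq> V"
    using \<open>open V\<close> \<open>t0 \<in> V\<close> open_contains_ball by blast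
  then obtain \<eta> where "\<eta> > 0"
    and near: "\<forall>l\<in>S. dist l l0 < \<eta> \<longrightarrow> (\<exists>t. pC (base l + t *s dir l) = 0 \<and> norm (t - t0) < \<epsilon>)"
    using pC_line_root_persists[OF base dir \<open>l0 \<in> S\<close> root dir_nonzero[OF \<open>l0 \<in> S\<close>]] by blast
  have "\<exists>t\<in>V. pC (base l + t *s dir l) = 0" if l: "l \<in> S" "dist l l0 < \<eta>" for l
  proof -
    obtain t where "pC (base l + t *s dir l) = 0" "norm (t - t0) < \<epsilon>" using near l by blast
    moreover from this have "t \<in> V"
      using \<open>ball t0 \<epsilon> \<subseteq> V\<close> by (auto simp: dist_norm norm_minus_commute)
    ultimately show ?thesis by blast
  qed
  thus "\<exists>\<eta>>0. \<forall>l\<in>S. dist l l0 < \<eta> \<longrightarrow> l \<in> {l \<in> S. \<exists>t\<in>V. pC (base l + t *s dir l) = 0}"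
    using \<open>\<eta> > 0\<close> by blast
qed auto

lemma closed_line_root_params:
  fixes S :: "'a::heine_borel set"
  assumes "compact S" and base: "continuous_on S base" and dir: "continuous_on S dir"
    and dir_nonzero: "\<And>l. l \<in> S \<Longrightarrow> pC (dir l) \<noteq> 0"
    and "closed W" and "V \<subseteq> W"
    and no_root_W: "\<And>l t. l \<in> S \<Longrightarrow> t \<in> W - V \<Longrightarrow> pC (base l + t *s dir l) \<noteq> 0"
  shows "closed {l \<in> S. \<exists>t\<in>V. pC (base l + t *s dir l) = 0}"
proof -
  obtain R where R: "\<And>l t. l \<in> S \<Longrightarrow> pC (base l + t *s dir l) = 0 \<Longrightarrow> norm t \<le> R"
    using pC_line_roots_bounded[OF \<open>compact S\<close> base dir dir_nonzero] by metis
  define K where "K = {x \<in> S \<times> (cball 0 R \<inter> W). pC (base (fst x) + snd x *s dir (fst x)) = 0}"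
  have "continuous_on (S \<times> (cball 0 R \<inter> W)) (\<lambda>x. pC (base (fst x) + snd x *s dir (fst x)))"
    by (intro continuous_on_compose2[OF continuous_on_pC] continuous_intros
        continuous_on_compose2[OF base] continuous_on_compose2[OF dir]) auto
  moreover have "closed (S \<times> (cball 0 R \<inter> W))"
    using \<open>compact S\<close> \<open>closed W\<close> by (simp add: closed_Times closed_Int compact_imp_closed)
  ultimately have "closed K"
    unfolding K_def by (rule continuous_closed_preimage_constant)
  hence "compact ((S \<times> cball 0 R) \<inter> K)"
    using \<open>compact S\<close> by (intro compact_Int_closed compact_Times compact_cball)
  moreover have "(S \<times> cball 0 R) \<inter> K = K" by (auto simp: K_def)
  ultimately have "compact (fst ` K)"
    by (simp add: compact_continuous_image continuous_on_fst)
  moreover have "{l \<in> S. \<exists>t\<in>V. pC (base l + t *s dir l) = 0} = fst ` K"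
  proof
    show "{l \<in> S. \<exists>t\<in>V. pC (base l + t *s dir l) = 0} \<subseteq> fst ` K"
    proof
      fix l assume "l \<in> {l \<in> S. \<exists>t\<in>V. pC (base l + t *s dir l) = 0}"
      then obtain t where "l \<in> S" "t \<in> V" "pC (base l + t *s dir l) = 0" by blast
      hence "(l, t) \<in> K" using R \<open>V \<subseteq> W\<close> by (auto simp: K_def)
      thus "l \<in> fst ` K" by (metis fst_conv image_eqI)
    qed
    show "fst ` K \<subseteq> {l \<in> S. \<exists>t\<in>V. pC (base l + t *s dir l) = 0}"
      using no_root_W by (fastforce simp: K_def)
  qed
  ultimately show ?thesis by (simp add: compact_imp_closed)
qed

lemma pC_line_no_root_homotopy:
  fixes S :: "'a::heine_borel set"
  assumes "connected S" and "compact S" and "a \<in> S" and "b \<in> S"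
    and base: "continuous_on S base" and dir: "continuous_on S dir"
    and dir_nonzero: "\<And>l. l \<in> S \<Longrightarrow> pC (dir l) \<noteq> 0"
    and "open V" and "closed W" and "V \<subseteq> W"
    and no_root_W: "\<And>l t. l \<in> S \<Longrightarrow> t \<in> W - V \<Longrightarrow> pC (base l + t *s dir l) \<noteq> 0"
    and no_root_a: "\<And>t. t \<in> V \<Longrightarrow> pC (base a + t *s dir a) \<noteq> 0"
    and "t \<in> V"
  shows "pC (base b + t *s dir b) \<noteq> 0"
proof -
  let ?T = "{l \<in> S. \<exists>t\<in>V. pC (base l + t *s dir l) = 0}"
  have "openin (top_of_set S) ?T"
    using base dir dir_nonzero \<open>open V\<close> by (rule openin_line_root_params)
  moreover have "closedin (top_of_set S) ?T"
    using assms by (intro closed_subset closed_line_root_params) auto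
  ultimately have "?T = {} \<or> ?T = S"
    using \<open>connected S\<close> connected_clopen by blast
  moreover have "a \<notin> ?T" using no_root_a by blast
  ultimately have "b \<notin> ?T" using \<open>a \<in> S\<close> by blast
  thus ?thesis using \<open>b \<in> S\<close> \<open>t \<in> V\<close> by blast
qed

lemma pC_line_root_persists_from_0:
  fixes base dir :: "real \<Rightarrow> complex^'n"
  assumes "continuous_on {0..1} base" and "continuous_on {0..1} dir"
    and "pC (base 0 + \<tau> *s dir 0) = 0" and "pC (dir 0) \<noteq> 0" and "\<epsilon> > 0"
  obtains l t where "0 < l" "l \<le> 1" "pC (base l + t *s dir l) = 0" "norm (t - \<tau>) < \<epsilon>"
proof -
  obtain \<eta> where "\<eta> > 0"
    and near: "\<forall>l\<in>{0..1}. dist l 0 < \<eta> \<longrightarrow> (\<exists>t. pC (base l + t *s dir l) = 0 \<and> norm (t - \<tau>) < \<epsilon>)"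
    using pC_line_root_persists[OF assms(1,2) _ assms(3,4,5)] by auto
  define l where "l = min (\<eta> / 2) 1"
  have "0 < l" "l \<le> 1" "dist l 0 < \<eta>" using \<open>\<eta> > 0\<close> by (auto simp: l_def dist_real_def)
  thus ?thesis using near that by auto
qed

lemma pC_segment_nonzero:
  assumes "0 \<notin> p ` closed_segment a v" and "l \<in> {0..1}"
  shows "pC (complex_vec ((1 - l) *\<^sub>R a + l *\<^sub>R v)) \<noteq> 0"
proof -
  have "(1 - l) *\<^sub>R a + l *\<^sub>R v \<in> closed_segment a v"
    using assms(2) by (auto simp: in_segment)
  thus ?thesis using assms(1) by force
qed

end

lemma homogeneous_add_e0:
  assumes "homogeneous_deg p d"
  shows "p (x + \<sigma> *\<^sub>R e0) = (-1) ^ d * p ((- \<sigma>) *\<^sub>R e0 - x)"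
proof -
  have "p (x + \<sigma> *\<^sub>R e0) = p ((-1) *\<^sub>R ((- \<sigma>) *\<^sub>R e0 - x))"
    by (rule arg_cong[where f = p]) (simp add: algebra_simps)
  thus ?thesis using assms unfolding homogeneous_deg_def by metis
qed

lemma hcone_add_e0_nonzero:
  assumes "homogeneous_deg p d" and "x \<in> hcone p e0" and "\<sigma> > 0"
  shows "p (x + \<sigma> *\<^sub>R e0) \<noteq> 0"
proof
  assume "p (x + \<sigma> *\<^sub>R e0) = 0"
  hence "p ((- \<sigma>) *\<^sub>R e0 - x) = 0" using homogeneous_add_e0[OF assms(1)] by simp
  hence "- \<sigma> \<ge> 0" using assms(2) unfolding hcone_def by blast
  thus False using assms(3) by simp
qed

lemma hcone_int_add_e0_nonzero:
  assumes "homogeneous_deg p d" and "x \<in> hcone_int p e0" and "\<sigma> \<ge> 0"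
  shows "p (x + \<sigma> *\<^sub>R e0) \<noteq> 0"
proof
  assume "p (x + \<sigma> *\<^sub>R e0) = 0"
  hence "p ((- \<sigma>) *\<^sub>R e0 - x) = 0" using homogeneous_add_e0[OF assms(1)] by simp
  hence "- \<sigma> > 0" using assms(2) unfolding hcone_int_def by blast
  thus False using assms(3) by simp
qed

lemma hcone_int_segment_nonzero:
  assumes "homogeneous_deg p d" and "p e0 \<noteq> 0" and "e \<in> hcone_int p e0"
  shows "0 \<notin> p ` closed_segment e0 e"
proof
  assume "0 \<in> p ` closed_segment e0 e"
  then obtain l where l: "0 \<le> l" "l \<le> 1" and root: "p ((1 - l) *\<^sub>R e0 + l *\<^sub>R e) = 0"
    by (auto simp: in_segment)
  have "l \<noteq> 0" using root assms(2) by auto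
  hence "l * ((1 - l) / l) = 1 - l" by simp
  hence "(1 - l) *\<^sub>R e0 + l *\<^sub>R e = l *\<^sub>R (e + ((1 - l) / l) *\<^sub>R e0)"
    by (simp add: scaleR_add_right add.commute)
  hence "p ((1 - l) *\<^sub>R e0 + l *\<^sub>R e) = l ^ d * p (e + ((1 - l) / l) *\<^sub>R e0)"
    using assms(1) by (simp add: homogeneous_deg_def)
  moreover have "p (e + ((1 - l) / l) *\<^sub>R e0) \<noteq> 0"
    using l by (intro hcone_int_add_e0_nonzero[OF assms(1,3)]) simp
  ultimately show False using root \<open>l \<noteq> 0\<close> by simp
qed

lemma DERIV_ln_nonzero:
  assumes "x \<noteq> 0"
  shows "(ln has_real_derivative inverse x) (at x)"
proof (cases "x > 0")
  case False
  hence "((\<lambda>y. ln (- y)) has_real_derivative inverse (- x) * (- 1)) (at x)"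
    using assms by (intro DERIV_chain2[OF DERIV_ln]) (auto intro!: derivative_eq_intros)
  thus ?thesis by (simp add: ln_minus)
qed (rule DERIV_ln)

lemma DERIV_ln_nonzero_compose:
  assumes "(f has_real_derivative f') (at x)" and "f x \<noteq> 0"
  shows "((\<lambda>y. ln (f y)) has_real_derivative f' / f x) (at x)"
  using DERIV_chain2[OF DERIV_ln_nonzero[OF assms(2)] assms(1)] by (simp add: divide_inverse mult.commute)

text \<open>Isabelle's \<open>ln\<close> is even (\<open>ln (- x) = ln x\<close>), so \<open>loc_inner\<close> is the Hessian of \<open>- ln p\<close>
  on either side of the zero set.\<close>

lemma ln_abs_real: "ln \<bar>x\<bar> = ln (x::real)"
  by (cases "x \<ge> 0") (auto simp: ln_minus)

lemma loc_inner_self_eq_line_poly: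
  fixes H :: "real poly"
  assumes line: "\<And>r. poly H r = p (e + r *\<^sub>R x)" and "coeff H 0 \<noteq> 0"
  shows "loc_inner p e x x = (coeff H 1 / coeff H 0)\<^sup>2 - 2 * coeff H 2 / coeff H 0"
proof -
  have inner: "deriv (\<lambda>t. - ln \<bar>p (e + s *\<^sub>R x + t *\<^sub>R x)\<bar>) 0 = - poly (pderiv H) s / poly H s"
    if "poly H s \<noteq> 0" for s
  proof (rule DERIV_imp_deriv)
    have "((\<lambda>t. poly H (s + t)) has_real_derivative poly (pderiv H) s) (at 0)"
      by (auto intro!: derivative_eq_intros)
    hence "((\<lambda>t. ln (poly H (s + t))) has_real_derivative poly (pderiv H) s / poly H s) (at 0)"
      using DERIV_ln_nonzero_compose that by fastforce
    moreover have "(\<lambda>t. - ln \<bar>p (e + s *\<^sub>R x + t *\<^sub>R x)\<bar>) = (\<lambda>t. - ln (poly H (s + t)))"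
      by (simp add: line ln_abs_real scaleR_add_left add.assoc)
    ultimately show "((\<lambda>t. - ln \<bar>p (e + s *\<^sub>R x + t *\<^sub>R x)\<bar>) has_real_derivative
        - poly (pderiv H) s / poly H s) (at 0)"
      by (simp add: DERIV_minus)
  qed
  have "open {s. poly H s \<noteq> 0}" by (intro open_Collect_neq continuous_intros)
  from eventually_nhds_in_open[OF this, of 0] have "\<forall>\<^sub>F s in nhds 0. poly H s \<noteq> 0"
    using assms(2) by (simp add: poly_0_coeff_0)
  hence "loc_inner p e x x = deriv (\<lambda>s. - poly (pderiv H) s / poly H s) 0"
    unfolding loc_inner_def hess_form_def
    by (intro deriv_cong_ev) (auto elim!: eventually_mono simp: inner)
  also have "\<dots> = (coeff H 1 / coeff H 0)\<^sup>2 - 2 * coeff H 2 / coeff H 0"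
    using assms(2)
    by (intro DERIV_imp_deriv)
      (auto intro!: derivative_eq_intros simp: poly_0_coeff_0 coeff_pderiv numeral_2_eq_2
        field_simps power2_eq_square)
  finally show ?thesis .
qed

lemma loc_inner_base_eq_line_poly:
  fixes H :: "real poly"
  assumes "homogeneous_deg p d" and line: "\<And>r. poly H r = p (e + r *\<^sub>R x)" and "coeff H 0 \<noteq> 0"
  shows "loc_inner p e e x = coeff H 1 / coeff H 0"
proof -
  have inner: "deriv (\<lambda>t. - ln \<bar>p (e + s *\<^sub>R e + t *\<^sub>R x)\<bar>) 0 = - (coeff H 1 / coeff H 0) / (1 + s)"
    if "s > -1" for s
  proof (rule DERIV_imp_deriv)
    have "(1 + s) *\<^sub>R (e + (t / (1 + s)) *\<^sub>R x) = e + s *\<^sub>R e + ((1 + s) * (t / (1 + s))) *\<^sub>R x"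
      for t by (simp add: algebra_simps)
    moreover have "(1 + s) * (t / (1 + s)) = t" for t using that by simp
    ultimately have "e + s *\<^sub>R e + t *\<^sub>R x = (1 + s) *\<^sub>R (e + (t / (1 + s)) *\<^sub>R x)" for t
      by simp
    hence p_scaled: "p (e + s *\<^sub>R e + t *\<^sub>R x) = (1 + s) ^ d * poly H (t / (1 + s))" for t
      using assms(1) by (simp add: homogeneous_deg_def line)
    have deriv: "((\<lambda>t. (1 + s) ^ d * poly H (t / (1 + s))) has_real_derivative
        (1 + s) ^ d * (poly (pderiv H) 0 / (1 + s))) (at 0)"
      using that by (auto intro!: derivative_eq_intros)
    have "(1 + s) ^ d * (poly (pderiv H) 0 / (1 + s)) / ((1 + s) ^ d * poly H (0 / (1 + s)))
        = (coeff H 1 / coeff H 0) / (1 + s)"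
      using that by (simp add: poly_0_coeff_0 coeff_pderiv)
    hence "((\<lambda>t. ln ((1 + s) ^ d * poly H (t / (1 + s)))) has_real_derivative
        (coeff H 1 / coeff H 0) / (1 + s)) (at 0)"
      using DERIV_ln_nonzero_compose[OF deriv] that assms(3) by (simp add: poly_0_coeff_0)
    thus "((\<lambda>t. - ln \<bar>p (e + s *\<^sub>R e + t *\<^sub>R x)\<bar>) has_real_derivative
        - (coeff H 1 / coeff H 0) / (1 + s)) (at 0)"
      by (simp add: p_scaled ln_abs_real DERIV_minus)
  qed
  have "\<forall>\<^sub>F s in nhds (0::real). s > -1"
    by (rule eventually_nhds_in_open[of "{-1<..}", simplified]) auto
  hence "loc_inner p e e x = deriv (\<lambda>s. - (coeff H 1 / coeff H 0) / (1 + s)) 0"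
    unfolding loc_inner_def hess_form_def
    by (intro deriv_cong_ev) (auto elim!: eventually_mono simp: inner)
  also have "\<dots> = coeff H 1 / coeff H 0"
    using assms(3) by (intro DERIV_imp_deriv) (auto intro!: derivative_eq_intros)
  finally show ?thesis .
qed

text \<open>The case \<open>a\<^sup>2 < b\<close> is harmless because \<open>sqrt\<close> is negative on negative arguments.\<close>

lemma scaled_sqrt_square_diff_le:
  fixes a b \<alpha> :: real
  assumes "0 \<le> a" and "0 \<le> b" and "0 < \<alpha>" and "\<alpha> \<le> 1"
  shows "\<alpha> * sqrt (a\<^sup>2 - b) \<le> a"
proof (cases "a\<^sup>2 - b \<ge> 0")
  case True
  hence "\<alpha> * sqrt (a\<^sup>2 - b) \<le> sqrt (a\<^sup>2 - b)" using assms(3,4) by (simp add: mult_left_le_one_le)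
  also have "\<dots> \<le> sqrt (a\<^sup>2)" using assms(2) by (intro real_sqrt_le_mono) simp
  finally show ?thesis using assms(1) by simp
next
  case False
  hence "\<alpha> * sqrt (a\<^sup>2 - b) < 0" using assms(3) by (simp add: mult_pos_neg)
  thus ?thesis using assms(1) by linarith
qed

locale hyperbolic_complex_extension = homogeneous_complex_extension +
  fixes e0 :: "real^'n"
  assumes hyperbolic: "hyperbolic_in p e0"
begin

lemma e0_line_root_real:
  assumes "pC (complex_vec y + s *s complex_vec e0) = 0"
  shows "s \<in> \<real>"
proof -
  obtain q where q: "\<And>t. pC (complex_vec y + t *s complex_vec e0) = poly (map_poly complex_of_real q) t"
    and q_val: "\<And>r. poly q r = p (y + r *\<^sub>R e0)"
    using complex_extension_real_line[OF extension] by metis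
  obtain q' where q'_val: "\<And>t. poly q' t = p (t *\<^sub>R e0 - (- y))"
    and real_roots: "\<And>z. poly (map_poly complex_of_real q') z = 0 \<Longrightarrow> z \<in> \<real>"
    using hyperbolic unfolding hyperbolic_in_def by metis
  have "poly q = poly q'" by (rule ext) (simp add: q_val q'_val add.commute)
  hence "q = q'" by (simp add: poly_eq_poly_eq_iff)
  thus ?thesis using assms q real_roots by metis
qed

text \<open>Deform the direction from \<open>e0\<close> to \<open>v\<close>: a real root would put the non-real number
  \<open>\<i> * \<epsilon>\<close> among the roots of a line in direction \<open>e0\<close>.\<close>

lemma pC_no_root_upper_half_plane:
  assumes "0 \<notin> p ` closed_segment e0 v" and "\<epsilon> > 0" and "Im t > 0"
  shows "pC (complex_vec w + (\<i> * of_real \<epsilon>) *s complex_vec e0 + t *s complex_vec v) \<noteq> 0"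
proof -
  let ?base = "\<lambda>l::real. complex_vec w + (\<i> * of_real \<epsilon>) *s complex_vec e0"
  let ?dir = "\<lambda>l::real. complex_vec ((1 - l) *\<^sub>R e0 + l *\<^sub>R v)"
  have "pC (?base 1 + t *s ?dir 1) \<noteq> 0"
  proof (rule pC_line_no_root_homotopy[where S = "{0..1}" and a = 0 and b = 1 and base = ?base
        and dir = ?dir and V = "{t. Im t > 0}" and W = "{t. Im t \<ge> 0}"])
    show "continuous_on {0..1} ?dir" by (rule continuous_on_complex_vec_segment)
    show "pC (?dir l) \<noteq> 0" if "l \<in> {0..1}" for l
      using assms(1) that by (rule pC_segment_nonzero)
    show "pC (?base l + s *s ?dir l) \<noteq> 0" if "s \<in> {t. Im t \<ge> 0} - {t. Im t > 0}" for l s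
    proof
      define r where "r = Re s"
      have "s = of_real r" using that by (simp add: r_def complex_eq_iff)
      hence "?base l + s *s ?dir l
          = complex_vec (w + r *\<^sub>R ((1 - l) *\<^sub>R e0 + l *\<^sub>R v)) + (\<i> * of_real \<epsilon>) *s complex_vec e0"
        by (simp add: complex_vec_def vec_eq_iff algebra_simps)
      moreover assume "pC (?base l + s *s ?dir l) = 0"
      ultimately have "pC (complex_vec (w + r *\<^sub>R ((1 - l) *\<^sub>R e0 + l *\<^sub>R v))
          + (\<i> * of_real \<epsilon>) *s complex_vec e0) = 0" by (simp only:)
      hence "\<i> * of_real \<epsilon> \<in> \<real>" by (rule e0_line_root_real)
      thus False using assms(2) by (simp add: complex_is_Real_iff)
    qed
    show "pC (?base 0 + s *s ?dir 0) \<noteq> 0" if "s \<in> {t. Im t > 0}" for s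
    proof
      have "?base 0 + s *s ?dir 0 = complex_vec w + (\<i> * of_real \<epsilon> + s) *s complex_vec e0"
        by (simp add: complex_vec_def vec_eq_iff algebra_simps)
      moreover assume "pC (?base 0 + s *s ?dir 0) = 0"
      ultimately have "pC (complex_vec w + (\<i> * of_real \<epsilon> + s) *s complex_vec e0) = 0" by (simp only:)
      hence "\<i> * of_real \<epsilon> + s \<in> \<real>" by (rule e0_line_root_real)
      thus False using that assms(2) by (simp add: complex_is_Real_iff)
    qed
  qed (use assms(3) in \<open>auto simp: open_halfspace_Im_gt closed_halfspace_Im_ge\<close>)
  thus ?thesis by simp
qed

text \<open>A root in the upper half-plane would persist when the base point is moved by
  \<open>(\<i> * l) *s complex_vec e0\<close> with small \<open>l > 0\<close>; conjugation handles the lower half-plane.\<close>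

lemma hyperbolic_direction:
  assumes segment: "0 \<notin> p ` closed_segment e0 v"
    and root: "pC (complex_vec w + \<tau> *s complex_vec v) = 0"
  shows "\<tau> \<in> \<real>"
proof -
  have no_upper_root: False if root: "pC (complex_vec w + t *s complex_vec v) = 0" and "Im t > 0" for t
  proof -
    let ?base = "\<lambda>l::real. complex_vec w + (\<i> * of_real l) *s complex_vec e0"
    have "continuous_on {0..1} ?base" by (intro continuous_intros)
    moreover have "pC (?base 0 + t *s complex_vec v) = 0" using root by simp
    moreover have "pC (complex_vec v) \<noteq> 0" using segment by force
    moreover have "Im t / 2 > 0" using \<open>Im t > 0\<close> by simp
    ultimately obtain l s where "0 < l" "l \<le> 1" and root_l: "pC (?base l + s *s complex_vec v) = 0"
      and "norm (s - t) < Im t / 2"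
      by (rule pC_line_root_persists_from_0[OF _ continuous_on_const])
    moreover from this have "Im s > 0"
      using abs_Im_le_cmod[of "s - t"] by (simp add: abs_le_iff)
    ultimately show False using pC_no_root_upper_half_plane[OF segment \<open>0 < l\<close>] by blast
  qed
  obtain q where q: "\<And>t. pC (complex_vec w + t *s complex_vec v) = poly (map_poly complex_of_real q) t"
    using complex_extension_real_line[OF extension] by metis
  have "pC (complex_vec w + cnj \<tau> *s complex_vec v) = 0"
    using root by (simp add: q real_poly_cnj_root_iff coeff_map_poly)
  moreover have "Im \<tau> > 0 \<or> Im (cnj \<tau>) > 0" if "\<tau> \<notin> \<real>"
    using that by (auto simp: complex_is_Real_iff)
  ultimately show ?thesis using no_upper_root root by blast
qed

text \<open>Deform the direction from \<open>e0\<close> to \<open>e\<close>: roots on the imaginary axis are real by the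
  hyperbolicity of the intermediate directions, hence zero, and \<open>p (x + \<delta> *\<^sub>R e0) \<noteq> 0\<close>.\<close>

lemma pC_no_root_right_half_plane:
  assumes x: "x \<in> hcone p e0" and segment: "0 \<notin> p ` closed_segment e0 e"
    and "\<delta> > 0" and "Re t > 0"
  shows "pC (complex_vec (x + \<delta> *\<^sub>R e0) + t *s complex_vec e) \<noteq> 0"
proof -
  let ?base = "\<lambda>l::real. complex_vec (x + \<delta> *\<^sub>R e0)"
  let ?dir = "\<lambda>l::real. complex_vec ((1 - l) *\<^sub>R e0 + l *\<^sub>R e)"
  have "pC (?base 1 + t *s ?dir 1) \<noteq> 0"
  proof (rule pC_line_no_root_homotopy[where S = "{0..1}" and a = 0 and b = 1 and base = ?base
        and dir = ?dir and V = "{t. Re t > 0}" and W = "{t. Re t \<ge> 0}"])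
    show "continuous_on {0..1} ?dir" by (rule continuous_on_complex_vec_segment)
    show "pC (?dir l) \<noteq> 0" if "l \<in> {0..1}" for l
      using segment that by (rule pC_segment_nonzero)
    show "pC (?base l + s *s ?dir l) \<noteq> 0"
      if "l \<in> {0..1}" and "s \<in> {t. Re t \<ge> 0} - {t. Re t > 0}" for l s
    proof
      assume root: "pC (?base l + s *s ?dir l) = 0"
      have "closed_segment e0 ((1 - l) *\<^sub>R e0 + l *\<^sub>R e) \<subseteq> closed_segment e0 e"
        using that(1) by (auto simp: subset_closed_segment in_segment)
      hence "s \<in> \<real>" using hyperbolic_direction segment root by blast
      hence "s = 0" using that(2) by (simp add: complex_is_Real_iff complex_eq_iff)
      thus False using root hcone_add_e0_nonzero[OF homogeneous x \<open>\<delta> > 0\<close>] by simp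
    qed
    show "pC (?base 0 + s *s ?dir 0) \<noteq> 0" if "s \<in> {t. Re t > 0}" for s
    proof
      assume "pC (?base 0 + s *s ?dir 0) = 0"
      hence root: "pC (complex_vec (x + \<delta> *\<^sub>R e0) + s *s complex_vec e0) = 0" by simp
      define r where "r = Re s"
      have "s = of_real r" using e0_line_root_real[OF root] by (simp add: r_def complex_is_Real_iff complex_eq_iff)
      hence "complex_vec (x + \<delta> *\<^sub>R e0) + s *s complex_vec e0 = complex_vec (x + (\<delta> + r) *\<^sub>R e0)"
        by (simp add: complex_vec_def vec_eq_iff algebra_simps)
      hence "p (x + (\<delta> + r) *\<^sub>R e0) = 0" using root by simp
      moreover have "\<delta> + r > 0" using that \<open>\<delta> > 0\<close> by (simp add: r_def)
      ultimately show False using hcone_add_e0_nonzero[OF homogeneous x] by blast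
    qed
  qed (use \<open>Re t > 0\<close> in \<open>auto simp: open_halfspace_Re_gt closed_halfspace_Re_ge\<close>)
  thus ?thesis by simp
qed

lemma hcone_add_nonzero:
  assumes x: "x \<in> hcone p e0" and segment: "0 \<notin> p ` closed_segment e0 e" and "\<tau> > 0"
  shows "p (x + \<tau> *\<^sub>R e) \<noteq> 0"
proof
  assume "p (x + \<tau> *\<^sub>R e) = 0"
  let ?base = "\<lambda>l::real. complex_vec (x + l *\<^sub>R e0)"
  have "continuous_on {0..1} ?base" unfolding complex_vec_linear by (intro continuous_intros)
  moreover have "pC (?base 0 + of_real \<tau> *s complex_vec e) = 0"
    using \<open>p (x + \<tau> *\<^sub>R e) = 0\<close> by (simp flip: complex_vec_scaleR complex_vec_add)
  moreover have "pC (complex_vec e) \<noteq> 0" using segment by force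
  moreover have "\<tau> / 2 > 0" using \<open>\<tau> > 0\<close> by simp
  ultimately obtain l s where "0 < l" "l \<le> 1" and root: "pC (?base l + s *s complex_vec e) = 0"
    and "norm (s - of_real \<tau>) < \<tau> / 2"
    by (rule pC_line_root_persists_from_0[OF _ continuous_on_const])
  moreover from this have "Re s > 0"
    using abs_Re_le_cmod[of "s - of_real \<tau>"] by (simp add: abs_le_iff)
  ultimately show False using pC_no_root_right_half_plane[OF x segment] by blast
qed

lemma hcone_line_roots_negative_real:
  assumes x: "x \<in> hcone p e0" and e: "e \<in> hcone_int p e0"
    and root: "pC (complex_vec e + s *s complex_vec x) = 0"
  shows "s \<in> \<real> \<and> Re s < 0"
proof -
  have segment: "0 \<notin> p ` closed_segment e0 e"
    using hcone_int_segment_nonzero[OF homogeneous _ e] hyperbolic by (simp add: hyperbolic_in_def)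
  have "p e \<noteq> 0" using hcone_int_add_e0_nonzero[OF homogeneous e, of 0] by simp
  hence "s \<noteq> 0" using root by auto
  have "complex_vec e + s *s complex_vec x = s *s (complex_vec x + inverse s *s complex_vec e)"
    using \<open>s \<noteq> 0\<close> by (simp add: vec_eq_iff field_simps)
  hence "s ^ d * pC (complex_vec x + inverse s *s complex_vec e) = 0"
    using root by (simp only: pC_homogeneous)
  hence root': "pC (complex_vec x + inverse s *s complex_vec e) = 0"
    using \<open>s \<noteq> 0\<close> by simp
  hence "inverse s \<in> \<real>" by (rule hyperbolic_direction[OF segment])
  then obtain r where r: "inverse s = of_real r" by (rule Reals_cases)
  have "p (x + r *\<^sub>R e) = 0"
    using root' by (simp add: r flip: complex_vec_scaleR complex_vec_add)
  hence "\<not> r > 0" using hcone_add_nonzero[OF x segment] by blast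
  moreover have "r \<noteq> 0" using r \<open>s \<noteq> 0\<close> by auto
  ultimately have "r < 0" by simp
  moreover have "s = of_real (inverse r)" using r by (metis inverse_inverse_eq of_real_inverse)
  ultimately show ?thesis by (simp del: of_real_inverse)
qed

lemma hcone_subset_quad_cone:
  assumes e: "e \<in> hcone_int p e0" and "0 < \<alpha>" and "\<alpha> \<le> 1"
  shows "hcone p e0 \<subseteq> quad_cone p e \<alpha>"
proof
  fix x assume x: "x \<in> hcone p e0"
  obtain H where H: "\<And>t. pC (complex_vec e + t *s complex_vec x) = poly (map_poly complex_of_real H) t"
    and line: "\<And>r. poly H r = p (e + r *\<^sub>R x)"
    using complex_extension_real_line[OF extension] by metis
  have "coeff H 0 \<noteq> 0"
    using line[of 0] hcone_int_add_e0_nonzero[OF homogeneous e, of 0] by (simp add: poly_0_coeff_0)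
  hence "lead_coeff H \<noteq> 0" by auto
  have sign: "coeff H k * lead_coeff H \<ge> 0" for k
    using hcone_line_roots_negative_real[OF x e] H by (intro coeff_mult_lead_coeff_nonneg_if_negative_roots) simp
  have ratio_nonneg: "coeff H k / coeff H 0 \<ge> 0" for k
    using sign[of k] sign[of 0] \<open>lead_coeff H \<noteq> 0\<close>
    by (auto simp: zero_le_mult_iff zero_le_divide_iff)
  have "loc_norm p e x = sqrt ((coeff H 1 / coeff H 0)\<^sup>2 - 2 * coeff H 2 / coeff H 0)"
    unfolding loc_norm_def by (simp add: loc_inner_self_eq_line_poly[OF line \<open>coeff H 0 \<noteq> 0\<close>])
  moreover have "loc_inner p e e x = coeff H 1 / coeff H 0"
    by (rule loc_inner_base_eq_line_poly[OF homogeneous line \<open>coeff H 0 \<noteq> 0\<close>])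
  ultimately show "x \<in> quad_cone p e \<alpha>"
    unfolding quad_cone_def using ratio_nonneg[of 1] ratio_nonneg[of 2] assms(2,3)
    by (simp add: scaled_sqrt_square_diff_le)
qed

end

theorem proposition3p3:
  fixes p :: "real^'n \<Rightarrow> real" and e0 e :: "real^'n" and d :: nat
    and A :: "real^'n^'m" and b :: "real^'m" and \<alpha> :: real
  assumes "real_polynomial_function p"
    and "homogeneous_deg p d"
    and "hyperbolic_in p e0"
    and "\<And>L. subspace L \<Longrightarrow> L \<subseteq> hcone p e0 \<Longrightarrow> L = {0}"
    and "e \<in> hcone_int p e0"
    and "0 < \<alpha>" and "\<alpha> \<le> 1"
  shows "HP_feasible p e0 A b \<subseteq> QP_feasible p e \<alpha> A b"
proof -
  obtain pC where "complex_extension p pC"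
    using real_polynomial_function_complex_extension[OF assms(1)] by metis
  then interpret hyperbolic_complex_extension p d pC e0
    using assms(2,3) by unfold_locales
  show ?thesis
    using hcone_subset_quad_cone[OF assms(5-7)] by (auto simp: HP_feasible_def QP_feasible_def)
qed

end
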